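(* Consider the following two-bidder auction with limit price $L>0$. A single good has common value $v$ with CDF $F_v$, density $f_v$, support $\mathbb{R}_+$ and finite mean, $\mathbb{E}[v]>L$, and $\underline v$ in the support of $F_v$ satisfies $L=\mathbb{E}[\tilde v\mid\tilde v<\underline v]$ ($\tilde v\sim F_v$). Alice bids knowing only $F_v$; then $v$ is realized and Bob, observing $v$ but not Alice's bid, bids. The highest bid wins and pays its bid (payoff $v$ minus bid) unless it is strictly below $L$, in which case the good is unsold. If bids tie, Bob wins; Bob can win with a bid equal to $L$; a winning bid of Alice equal exactly to $L$ results in no sale. Let $$\beta_L(v)=\begin{cases}\mathbb{E}[\tilde v\mid \tilde v<v] & v\ge \underline v,\\ L & L<v<\underline v,\\ 0 & v\le L,\end{cases}$$ and consider the equilibrium in which Bob bids $\beta_L(v)$ and Alice draws $v'\sim F_v$ independently and bids $\beta_L(v')$. Then Bob's expected profit is $$\begin{aligned}\Pi_B&=\mathbb{E}\left[\max\left(v_1\mathbf{1}\{v_1\ge\underline v\}-v_2\mathbf{1}\{v_2\ge\underline v\},0\right)\right]+\mathbb{E}\left[(v_1-L)\mathbf{1}\{L<v_1<\underline v\}\mathbf{1}\{v_2<\underline v\}\right]-\mathbb{E}\left[v_1\mathbf{1}\{v_1<\underline v\}\mathbf{1}\{v_2\ge\underline v\}\right]\\&=\mathbb{E}\left[\max\left(v_1\mathbf{1}\{v_1\ge\underline v\}-v_2\mathbf{1}\{v_2\ge\underline v\},0\right)\right]+F_v(\underline v)\,\mathbb{E}\left[(v-L)\mathbf{1}\{L<v<\underline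 v\}\right]-(1-F_v(\underline v))\,\mathbb{E}[v\mathbf{1}\{v<\underline v\}],\end{aligned}$$ where $v_1,v_2$ are i.i.d. draws from $F_v$ and $v\sim F_v$.
   Context: Bidders are risk neutral. $\mathbf{1}\{\cdot\}$ denotes an indicator. *)

theory Defs
  imports "HOL-Probability.Probability"
begin

definition cond_mean_below :: "real measure \<Rightarrow> real \<Rightarrow> real" where
  "cond_mean_below M t =
     (\<integral>x. x * indicator {..<t} x \<partial>M) / measure M {..<t}"

definition beta_L :: "real measure \<Rightarrow> real \<Rightarrow> real \<Rightarrow> real \<Rightarrow> real" where
  "beta_L M L vlow v =
     (if v \<ge> vlow then cond_mean_below M v
      else if L < v then L else 0)"

definition bob_payoff :: "real \<Rightarrow> real \<Rightarrow> real \<Rightarrow> real \<Rightarrow> real" where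
  "bob_payoff L bB bA v = (if bA \<le> bB \<and> L \<le> bB then v - bB else 0)"

definition bob_expected_profit :: "real measure \<Rightarrow> real \<Rightarrow> real \<Rightarrow> real" where
  "bob_expected_profit M L vlow =
     (\<integral>z. bob_payoff L (beta_L M L vlow (fst z)) (beta_L M L vlow (snd z)) (fst z)
        \<partial>(M \<Otimes>\<^sub>M M))"

end

theory Submission
  imports Defs
begin

text \<open>
  Because the conditional mean \<open>c(v) = E[v\<^sub>2 | v\<^sub>2 < v]\<close> increases strictly on
  \<open>[vlow, \<infinity>)\<close> starting from \<open>c(vlow) = L\<close>, Bob with \<open>v\<^sub>1 \<ge> vlow\<close> wins exactly when
  \<open>v\<^sub>2 \<le> v\<^sub>1\<close> and gains \<open>v\<^sub>1 - c(v\<^sub>1)\<close>; with \<open>L < v\<^sub>1 < vlow\<close> he bids \<open>L\<close> and wins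
  exactly when \<open>v\<^sub>2 \<le> vlow\<close>; otherwise he gains nothing. Integrating out \<open>v\<^sub>2\<close>, and
  using that the distribution has no atoms, the first gain becomes the rent
  \<open>E[(v\<^sub>1 - v\<^sub>2) 1{v\<^sub>2 < v\<^sub>1}]\<close> on \<open>v\<^sub>1 \<ge> vlow\<close>. Pointwise, the max-term equals this rent
  plus \<open>1{v\<^sub>1 \<ge> vlow} v\<^sub>2 1{v\<^sub>2 < vlow}\<close>, which by independence has the same
  expectation as the subtracted third term. The second form only factorises the
  expectations of products of a function of \<open>v\<^sub>1\<close> and a function of \<open>v\<^sub>2\<close>.
\<close>

lemma (in pair_sigma_finite) integrable_product_mult:
  fixes f :: "'a \<Rightarrow> real" and g :: "'b \<Rightarrow> real"
  assumes f: "integrable M1 f" and g: "integrable M2 g"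
  shows "integrable (M1 \<Otimes>\<^sub>M M2) (\<lambda>z. f (fst z) * g (snd z))"
proof (rule Fubini_integrable)
  show "(\<lambda>z. f (fst z) * g (snd z)) \<in> borel_measurable (M1 \<Otimes>\<^sub>M M2)"
    using f g by measurable
  show "integrable M1 (\<lambda>x. \<integral>y. norm (f (fst (x, y)) * g (snd (x, y))) \<partial>M2)"
    using f by (simp add: abs_mult)
qed (use g in simp)

lemma (in pair_sigma_finite) integral_product_mult:
  fixes f :: "'a \<Rightarrow> real" and g :: "'b \<Rightarrow> real"
  assumes "integrable M1 f" and "integrable M2 g"
  shows "(\<integral>z. f (fst z) * g (snd z) \<partial>(M1 \<Otimes>\<^sub>M M2)) = integral\<^sup>L M1 f * integral\<^sup>L M2 g"
  using integral_fst'[OF integrable_product_mult[OF assms]] by simp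

lemma measure_density_lborel_singleton:
  fixes f :: "real \<Rightarrow> ennreal"
  assumes "f \<in> borel_measurable borel"
  shows "measure (density lborel f) {v} = 0"
proof -
  have "AE x in lborel. x \<in> {v} \<longrightarrow> f x = 0"
    using AE_lborel_singleton[of v] by eventually_elim simp
  then have "{v} \<in> null_sets (density lborel f)"
    using assms by (subst null_sets_density_iff) auto
  then show ?thesis
    by (simp add: measure_def null_setsD1)
qed

context real_distribution
begin

lemma integrable_pair_linear_growth:
  fixes h :: "real \<times> real \<Rightarrow> real"
  assumes mean: "integrable M (\<lambda>x. x)" and h: "h \<in> borel_measurable (M \<Otimes>\<^sub>M M)"
    and growth: "\<And>z. \<bar>h z\<bar> \<le> C + \<bar>fst z\<bar> + \<bar>snd z\<bar>"
  shows "integrable (M \<Otimes>\<^sub>M M) h"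
proof -
  interpret pair_prob_space M M ..
  have "integrable (M \<Otimes>\<^sub>M M) (\<lambda>z. C + \<bar>fst z\<bar> * 1 + 1 * \<bar>snd z\<bar>)"
    using mean by (intro Bochner_Integration.integrable_add integrable_product_mult) auto
  then show ?thesis
    by (rule Bochner_Integration.integrable_bound) (use h growth in \<open>auto intro!: order_trans[OF growth]\<close>)
qed

lemma borel_measurable_cond_mean_below: "cond_mean_below M \<in> borel_measurable borel"
proof -
  have "(\<lambda>(t, x). x * indicator {..<t} x) = (\<lambda>p. snd p * of_bool (snd p < fst p) :: real)"
    by (auto simp: indicator_def fun_eq_iff)
  then have "(\<lambda>(t, x). x * indicator {..<t} x) \<in> borel_measurable (borel \<Otimes>\<^sub>M M)"
    by simp
  then have "(\<lambda>t. \<integral>x. x * indicator {..<t} x \<partial>M) \<in> borel_measurable borel"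
    by (rule borel_measurable_lebesgue_integral)
  moreover have "(\<lambda>t. measure M {..<t}) \<in> borel_measurable borel"
    by (rule borel_measurable_mono) (auto simp: mono_def intro!: finite_measure_mono)
  ultimately show ?thesis
    unfolding cond_mean_below_def[abs_def] by measurable
qed

lemma measure_lessThan_mult_cond_mean_gap:
  assumes mean: "integrable M (\<lambda>x. x)" and pos: "measure M {..<s} > 0"
  shows "measure M {..<s} * (s - cond_mean_below M s) = (\<integral>x. (s - x) * indicator {..<s} x \<partial>M)"
proof -
  have "measure M {..<s} * (s - cond_mean_below M s)
      = s * measure M {..<s} - (\<integral>x. x * indicator {..<s} x \<partial>M)"
    using pos by (simp add: cond_mean_below_def right_diff_distrib)
  also have "\<dots> = (\<integral>x. s * indicator {..<s} x - x * indicator {..<s} x \<partial>M)"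
    using mean
    by (subst Bochner_Integration.integral_diff)
       (auto intro: integrable_real_mult_indicator simp: less_top[symmetric])
  finally show ?thesis
    by (simp add: left_diff_distrib)
qed

lemma cond_mean_below_less:
  assumes mean: "integrable M (\<lambda>x. x)" and pos: "measure M {..<s} > 0"
  shows "cond_mean_below M s < s"
proof -
  have "0 < (\<integral>x. (s - x) * indicator {..<s} x \<partial>M)"
  proof (rule integral_less_AE[where A = "{..<s}", of "\<lambda>_. 0", simplified])
    show "integrable M (\<lambda>x. (s - x) * indicator {..<s} x)"
      using mean by (intro integrable_real_mult_indicator) auto
    show "emeasure M {..<s} \<noteq> 0"
      using pos by (simp add: emeasure_eq_measure)
  qed (auto simp: indicator_def)
  also have "\<dots> = measure M {..<s} * (s - cond_mean_below M s)"
    using measure_lessThan_mult_cond_mean_gap[OF mean pos] ..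
  finally show ?thesis
    using pos by (simp add: zero_less_mult_iff)
qed

lemma cond_mean_below_strict_mono:
  assumes mean: "integrable M (\<lambda>x. x)" and pos: "measure M {..<s} > 0"
    and "s < t" and mass: "measure M {s<..<t} > 0"
  shows "cond_mean_below M s < cond_mean_below M t"
proof -
  let ?c = "cond_mean_below M s" and ?Q = "measure M {s..<t}"
  have int_part: "integrable M (\<lambda>x. x * indicator A x)" if "A \<in> sets borel" for A
    using mean that by (intro integrable_real_mult_indicator) auto
  have partition: "{..<t} = {..<s} \<union> {s..<t}" "{..<s} \<inter> {s..<t} = {}"
    using \<open>s < t\<close> by auto
  have "measure M {s<..<t} \<le> ?Q"
    by (rule finite_measure_mono) auto
  then have Q_pos: "?Q > 0"
    using mass by linarith
  have "s * ?Q = (\<integral>x. s * indicator {s..<t} x \<partial>M)"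
    by simp
  also have "\<dots> \<le> (\<integral>x. x * indicator {s..<t} x \<partial>M)"
    by (intro integral_mono int_part integrable_mult_right integrable_real_indicator)
       (auto simp: indicator_def less_top[symmetric])
  finally have lower_part: "s * ?Q \<le> (\<integral>x. x * indicator {s..<t} x \<partial>M)" .
  have "?c * measure M {..<t} = ?c * measure M {..<s} + ?c * ?Q"
    unfolding partition(1) by (subst finite_measure_Union) (use partition(2) in \<open>auto simp: algebra_simps\<close>)
  also have "\<dots> < (\<integral>x. x * indicator {..<s} x \<partial>M) + s * ?Q"
    using pos mult_strict_right_mono[OF cond_mean_below_less[OF mean pos] Q_pos]
    by (simp add: cond_mean_below_def)
  also have "\<dots> \<le> (\<integral>x. x * indicator {..<s} x \<partial>M) + (\<integral>x. x * indicator {s..<t} x \<partial>M)"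
    using lower_part by simp
  also have "\<dots> = (\<integral>x. x * indicator {..<t} x \<partial>M)"
    using \<open>s < t\<close>
    by (subst Bochner_Integration.integral_add[symmetric, OF int_part int_part])
       (auto intro!: Bochner_Integration.integral_cong simp: indicator_def)
  finally have "?c * measure M {..<t} < (\<integral>x. x * indicator {..<t} x \<partial>M)" .
  moreover have "measure M {..<s} \<le> measure M {..<t}"
    using \<open>s < t\<close> by (intro finite_measure_mono) auto
  ultimately show ?thesis
    using pos by (simp add: cond_mean_below_def[of M t] less_divide_eq)
qed

(* Since x / 0 = 0, the conditional mean vanishes below a null set. *)
lemma measure_lessThan_pos_if_cond_mean_below_nonzero:
  assumes "cond_mean_below M s \<noteq> 0"
  shows "measure M {..<s} > 0"
proof -
  have "measure M {..<s} \<noteq> 0"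
    using assms by (auto simp: cond_mean_below_def)
  then show ?thesis
    using measure_nonneg[of M "{..<s}"] by linarith
qed

lemma strict_mono_on_cond_mean_below:
  assumes mean: "integrable M (\<lambda>x. x)"
    and support: "\<And>a b. 0 \<le> a \<Longrightarrow> a < b \<Longrightarrow> measure M {a<..<b} > 0"
    and "0 \<le> a" and pos: "measure M {..<a} > 0"
  shows "strict_mono_on {a..} (cond_mean_below M)"
proof (rule strict_mono_onI)
  fix s t assume "s \<in> {a..}" "s < t"
  moreover have "measure M {..<a} \<le> measure M {..<s}"
    using \<open>s \<in> {a..}\<close> by (intro finite_measure_mono) auto
  ultimately show "cond_mean_below M s < cond_mean_below M t"
    using pos support[of s t] \<open>0 \<le> a\<close> by (intro cond_mean_below_strict_mono[OF mean]) auto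
qed

end

locale limit_price_auction = real_distribution M for M :: "real measure" +
  fixes L vlow :: real
  assumes integrable_value: "integrable M (\<lambda>v. v)"
    and atomless: "\<And>v. measure M {v} = 0"
    and limit_price_pos: "0 < L"
    and cond_mean_below_vlow: "cond_mean_below M vlow = L"
    and strict_mono_cond_mean_below: "strict_mono_on {vlow..} (cond_mean_below M)"
begin

lemma measure_lessThan_vlow_pos: "measure M {..<vlow} > 0"
  using limit_price_pos cond_mean_below_vlow
  by (intro measure_lessThan_pos_if_cond_mean_below_nonzero) simp

lemma measure_lessThan_pos:
  assumes "vlow \<le> v"
  shows "measure M {..<v} > 0"
proof -
  have "measure M {..<vlow} \<le> measure M {..<v}"
    using assms by (intro finite_measure_mono) auto
  then show ?thesis
    using measure_lessThan_vlow_pos by linarith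
qed

lemma limit_price_less_vlow: "L < vlow"
  using cond_mean_below_less[OF integrable_value measure_lessThan_vlow_pos] cond_mean_below_vlow
  by simp

lemma cond_mean_below_bounds:
  assumes "vlow \<le> v"
  shows "L \<le> cond_mean_below M v" and "cond_mean_below M v < v"
proof -
  show "L \<le> cond_mean_below M v"
    using strict_mono_on_leD[OF strict_mono_cond_mean_below, of vlow v] assms cond_mean_below_vlow
    by simp
  show "cond_mean_below M v < v"
    using cond_mean_below_less[OF integrable_value measure_lessThan_pos[OF assms]] .
qed

lemma measure_atMost_eq_lessThan: "measure M {..v} = measure M {..<v}"
proof -
  have "measure M {..v} = measure M ({..<v} \<union> {v})"
    by (rule arg_cong[where f = "measure M"]) auto
  also have "\<dots> = measure M {..<v}"
    using finite_measure_Union[of "{..<v}" "{v}"] atomless[of v] by simp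
  finally show ?thesis .
qed

lemma measure_atLeast_eq: "measure M {v..} = 1 - measure M {..v}"
  using prob_compl[of "{..<v}"] by (simp add: measure_atMost_eq_lessThan Compl_eq_Diff_UNIV[symmetric])

lemma bob_payoff_beta_L:
  "bob_payoff L (beta_L M L vlow v1) (beta_L M L vlow v2) v1 =
     indicator {vlow..} v1 * indicator {..v1} v2 * (v1 - cond_mean_below M v1)
     + (v1 - L) * indicator {L<..<vlow} v1 * indicator {..vlow} v2"
proof -
  let ?c = "cond_mean_below M"
  have le_iff: "?c a \<le> ?c b \<longleftrightarrow> a \<le> b" if "vlow \<le> a" "vlow \<le> b" for a b
    using strict_mono_on_less_eq[OF strict_mono_cond_mean_below] that by simp
  have gt: "L < ?c a" if "vlow < a" for a
    using strict_mono_onD[OF strict_mono_cond_mean_below, of vlow a] that cond_mean_below_vlow by simp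
  show ?thesis
  proof (cases "vlow \<le> v1")
    case True
    then show ?thesis
      using le_iff[of v2 v1] cond_mean_below_bounds(1)[of v1] cond_mean_below_bounds(1)[of v2]
        limit_price_pos limit_price_less_vlow
      by (cases "vlow \<le> v2") (auto simp: bob_payoff_def beta_L_def indicator_def)
  next
    case False
    then show ?thesis
      using gt[of v2] limit_price_pos limit_price_less_vlow cond_mean_below_vlow
      by (cases "vlow < v2") (auto simp: bob_payoff_def beta_L_def indicator_def)
  qed
qed

definition high_type_rent :: "real \<times> real \<Rightarrow> real" where
  "high_type_rent z = indicator {vlow..} (fst z) * (fst z - snd z) * indicator {..<fst z} (snd z)"

lemma integrable_high_type_rent: "integrable (M \<Otimes>\<^sub>M M) high_type_rent"
proof (rule integrable_pair_linear_growth[OF integrable_value, where C = 0])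
  have "high_type_rent = (\<lambda>z. indicator {vlow..} (fst z) * (fst z - snd z) * of_bool (snd z < fst z))"
    by (auto simp: high_type_rent_def fun_eq_iff indicator_def)
  then show "high_type_rent \<in> borel_measurable (M \<Otimes>\<^sub>M M)"
    by simp
qed (auto simp: high_type_rent_def indicator_def)

lemma bob_expected_profit_eq:
  "bob_expected_profit M L vlow =
     integral\<^sup>L (M \<Otimes>\<^sub>M M) high_type_rent
     + measure M {..vlow} * (\<integral>v. (v - L) * indicator {L<..<vlow} v \<partial>M)"
proof -
  interpret MM: pair_prob_space M M ..
  let ?c = "cond_mean_below M"
  define win_high where
    "win_high z = indicator {vlow..} (fst z) * indicator {..fst z} (snd z) * (fst z - ?c (fst z))"
    for z :: "real \<times> real"
  have "win_high = (\<lambda>z. indicator {vlow..} (fst z) * of_bool (snd z \<le> fst z) * (fst z - ?c (fst z)))"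
    by (auto simp: win_high_def fun_eq_iff indicator_def)
  then have "win_high \<in> borel_measurable (M \<Otimes>\<^sub>M M)"
    using borel_measurable_cond_mean_below by simp
  then have int_high: "integrable (M \<Otimes>\<^sub>M M) win_high"
  proof (rule integrable_pair_linear_growth[OF integrable_value, where C = 0])
    show "\<bar>win_high z\<bar> \<le> 0 + \<bar>fst z\<bar> + \<bar>snd z\<bar>" for z
      using cond_mean_below_bounds[of "fst z"] limit_price_pos by (auto simp: win_high_def indicator_def)
  qed
  have "(\<integral>y. win_high (x, y) \<partial>M) = (\<integral>y. high_type_rent (x, y) \<partial>M)" for x
  proof (cases "vlow \<le> x")
    case True
    then show ?thesis
      using measure_lessThan_mult_cond_mean_gap[OF integrable_value measure_lessThan_pos[OF True]]
      by (simp add: win_high_def high_type_rent_def measure_atMost_eq_lessThan mult.commute)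
  qed (simp add: win_high_def high_type_rent_def)
  then have rent: "integral\<^sup>L (M \<Otimes>\<^sub>M M) win_high = integral\<^sup>L (M \<Otimes>\<^sub>M M) high_type_rent"
    using MM.integral_fst'[OF int_high] MM.integral_fst'[OF integrable_high_type_rent] by simp
  define win_mid where
    "win_mid z = ((fst z - L) * indicator {L<..<vlow} (fst z)) * indicator {..vlow} (snd z)"
    for z :: "real \<times> real"
  have int_mid_gain: "integrable M (\<lambda>v. (v - L) * indicator {L<..<vlow} v)"
    using integrable_value by (intro integrable_real_mult_indicator) auto
  have int_mid: "integrable (M \<Otimes>\<^sub>M M) win_mid"
    unfolding win_mid_def using int_mid_gain
    by (intro MM.integrable_product_mult) (auto simp: less_top[symmetric])
  have "bob_expected_profit M L vlow = (\<integral>z. win_high z + win_mid z \<partial>(M \<Otimes>\<^sub>M M))"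
    unfolding bob_expected_profit_def bob_payoff_beta_L win_high_def win_mid_def ..
  also have "\<dots> = integral\<^sup>L (M \<Otimes>\<^sub>M M) win_high + integral\<^sup>L (M \<Otimes>\<^sub>M M) win_mid"
    by (rule Bochner_Integration.integral_add[OF int_high int_mid])
  also have "integral\<^sup>L (M \<Otimes>\<^sub>M M) win_mid = (\<integral>v. (v - L) * indicator {L<..<vlow} v \<partial>M) * measure M {..vlow}"
    unfolding win_mid_def using int_mid_gain
    by (subst MM.integral_product_mult) (auto simp: less_top[symmetric])
  finally show ?thesis
    using rent by simp
qed

lemma integral_max_eq:
  "(\<integral>z. max (fst z * indicator {vlow..} (fst z) - snd z * indicator {vlow..} (snd z)) 0 \<partial>(M \<Otimes>\<^sub>M M))
     = integral\<^sup>L (M \<Otimes>\<^sub>M M) high_type_rent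
       + (1 - measure M {..vlow}) * (\<integral>v. v * indicator {..<vlow} v \<partial>M)"
proof -
  interpret MM: pair_prob_space M M ..
  define rival_low_value where
    "rival_low_value z = indicator {vlow..} (fst z) * (snd z * indicator {..<vlow} (snd z))"
    for z :: "real \<times> real"
  have int_low_part: "integrable M (\<lambda>v. v * indicator {..<vlow} v)"
    using integrable_value by (intro integrable_real_mult_indicator) auto
  have int_rival: "integrable (M \<Otimes>\<^sub>M M) rival_low_value"
    unfolding rival_low_value_def using int_low_part
    by (intro MM.integrable_product_mult) (auto simp: less_top[symmetric])
  have "max (fst z * indicator {vlow..} (fst z) - snd z * indicator {vlow..} (snd z)) 0
      = high_type_rent z + rival_low_value z" for z
    using limit_price_pos limit_price_less_vlow
    by (auto simp: high_type_rent_def rival_low_value_def indicator_def)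
  then have "(\<integral>z. max (fst z * indicator {vlow..} (fst z) - snd z * indicator {vlow..} (snd z)) 0 \<partial>(M \<Otimes>\<^sub>M M))
      = integral\<^sup>L (M \<Otimes>\<^sub>M M) high_type_rent + integral\<^sup>L (M \<Otimes>\<^sub>M M) rival_low_value"
    by (simp add: Bochner_Integration.integral_add[OF integrable_high_type_rent int_rival])
  also have "integral\<^sup>L (M \<Otimes>\<^sub>M M) rival_low_value = measure M {vlow..} * (\<integral>v. v * indicator {..<vlow} v \<partial>M)"
    unfolding rival_low_value_def using int_low_part
    by (subst MM.integral_product_mult) (auto simp: less_top[symmetric])
  also have "measure M {vlow..} = 1 - measure M {..vlow}"
    by (rule measure_atLeast_eq)
  finally show ?thesis .
qed

end

theorem theorem3:
  fixes f :: "real \<Rightarrow> real" and M :: "real measure" and L vlow :: real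
  assumes L_pos: "L > 0"
    and f_meas: "f \<in> borel_measurable borel"
    and f_nonneg: "\<And>x. f x \<ge> 0"
    and M_def: "M = density lborel (\<lambda>x. ennreal (f x))"
    and prob: "prob_space M"
    and supp_nonneg: "measure M {..<0} = 0"
    and supp_full: "\<And>a b. 0 \<le> a \<Longrightarrow> a < b \<Longrightarrow> measure M {a<..<b} > 0"
    and finite_mean: "integrable M (\<lambda>x. x)"
    and mean_gt: "(\<integral>x. x \<partial>M) > L"
    and vlow_supp: "vlow \<ge> 0"
    and vlow_def: "L = cond_mean_below M vlow"
  shows "bob_expected_profit M L vlow =
           (\<integral>z. max ((fst z) * indicator {vlow..} (fst z) - (snd z) * indicator {vlow..} (snd z)) 0 \<partial>(M \<Otimes>\<^sub>M M))
         + (\<integral>z. ((fst z) - L) * indicator {L<..<vlow} (fst z) * indicator {..<vlow} (snd z) \<partial>(M \<Otimes>\<^sub>M M))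
         - (\<integral>z. (fst z) * indicator {..<vlow} (fst z) * indicator {vlow..} (snd z) \<partial>(M \<Otimes>\<^sub>M M))
     \<and> (\<integral>z. max ((fst z) * indicator {vlow..} (fst z) - (snd z) * indicator {vlow..} (snd z)) 0 \<partial>(M \<Otimes>\<^sub>M M))
         + (\<integral>z. ((fst z) - L) * indicator {L<..<vlow} (fst z) * indicator {..<vlow} (snd z) \<partial>(M \<Otimes>\<^sub>M M))
         - (\<integral>z. (fst z) * indicator {..<vlow} (fst z) * indicator {vlow..} (snd z) \<partial>(M \<Otimes>\<^sub>M M))
       = (\<integral>z. max ((fst z) * indicator {vlow..} (fst z) - (snd z) * indicator {vlow..} (snd z)) 0 \<partial>(M \<Otimes>\<^sub>M M))
         + measure M {..vlow} * (\<integral>v. (v - L) * indicator {L<..<vlow} v \<partial>M)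
         - (1 - measure M {..vlow}) * (\<integral>v. v * indicator {..<vlow} v \<partial>M)"
proof -
  have "sets M = sets borel"
    by (simp add: M_def)
  then interpret real_distribution M
    using prob by (simp add: real_distribution_def real_distribution_axioms_def)
  have atomless: "measure M {v} = 0" for v
    unfolding M_def by (rule measure_density_lborel_singleton) (use f_meas in simp)
  have "measure M {..<vlow} > 0"
    using L_pos vlow_def by (intro measure_lessThan_pos_if_cond_mean_below_nonzero) simp
  then interpret limit_price_auction M L vlow
    using finite_mean atomless L_pos vlow_def strict_mono_on_cond_mean_below[OF finite_mean supp_full vlow_supp]
    by unfold_locales auto
  interpret MM: pair_prob_space M M ..
  have "(\<integral>z. ((fst z) - L) * indicator {L<..<vlow} (fst z) * indicator {..<vlow} (snd z) \<partial>(M \<Otimes>\<^sub>M M))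
      = measure M {..vlow} * (\<integral>v. (v - L) * indicator {L<..<vlow} v \<partial>M)"
    using finite_mean
    by (subst MM.integral_product_mult)
       (auto intro: integrable_real_mult_indicator simp: less_top[symmetric] measure_atMost_eq_lessThan)
  moreover have "(\<integral>z. (fst z) * indicator {..<vlow} (fst z) * indicator {vlow..} (snd z) \<partial>(M \<Otimes>\<^sub>M M))
      = (1 - measure M {..vlow}) * (\<integral>v. v * indicator {..<vlow} v \<partial>M)"
    using finite_mean
    by (subst MM.integral_product_mult)
       (auto intro: integrable_real_mult_indicator simp: less_top[symmetric] measure_atLeast_eq)
  ultimately show ?thesis
    using bob_expected_profit_eq integral_max_eq by simp
qed

end
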